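(* Let $a<b$ with $[a,b]\subset[0,\infty)$, let $f,g:[a,b]\to\mathbb{R}$ be integrable with $0\le g(t)\le1$ for all $t\in[a,b]$ and such that $\int_a^b g(t)f'(t)\,dt$ exists. Suppose $f$ is absolutely continuous on $[a,b]$ and $|f'|$ is convex on $[a,b]$. Let $\lambda:=\int_a^b g(t)\,dt$. Then $$\left|\int_a^{a+\lambda} f(t)\,dt-\int_a^b f(t)g(t)\,dt\right|\le\frac16\lambda^2|f'(a)|+\frac13\left[\lambda^2+(b-a-\lambda)^2\right]|f'(a+\lambda)|+\frac16(b-a-\lambda)^2|f'(b)|,$$ and $$\left|\int_a^b f(t)g(t)\,dt-\int_{b-\lambda}^b f(t)\,dt\right|\le\frac16\lambda^2|f'(b)|+\frac13\left[\lambda^2+(b-a-\lambda)^2\right]|f'(b-\lambda)|+\frac16(b-a-\lambda)^2|f'(a)|.$$ *)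

theory Defs
  imports "HOL-Analysis.Analysis"
begin

definition abs_continuous_on :: "real \<Rightarrow> real \<Rightarrow> (real \<Rightarrow> real) \<Rightarrow> bool" where
  "abs_continuous_on a b f \<longleftrightarrow>
     (\<forall>\<epsilon>>0. \<exists>\<delta>>0. \<forall>(n::nat) (x::nat \<Rightarrow> real) (y::nat \<Rightarrow> real).
        (\<forall>i<n. a \<le> x i \<and> x i \<le> y i \<and> y i \<le> b) \<longrightarrow>
        (\<forall>i<n. \<forall>j<n. i \<noteq> j \<longrightarrow> y i \<le> x j \<or> y j \<le> x i) \<longrightarrow>
        (\<Sum>i<n. y i - x i) < \<delta> \<longrightarrow>
        (\<Sum>i<n. \<bar>f (y i) - f (x i)\<bar>) < \<epsilon>)"

end

(* Put c = a + lam.  Since the integral of g over [a,b] is c - a, the difference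
   int_a^c f - int_a^b f g equals int_a^c (f - f c) (1 - g) - int_c^b (f - f c) g, and both
   weights lie in [0,1]; so it suffices to bound |f t - f c|.  On [a,c] and on [c,b] convexity
   keeps |f'| below its chord, and an absolutely continuous function whose derivative is almost
   everywhere dominated by L changes by at most the integral of L.  Integrating the resulting
   quadratic bounds in t gives the weights 1/6 and 1/3.  The second inequality is the first one
   for the weight 1 - g. *)

theory Submission imports Defs begin

lemma abs_continuous_on_imp_continuous_on:
  assumes "abs_continuous_on a b f"
  shows "continuous_on {a..b} f"
  unfolding continuous_on_iff
proof (intro ballI allI impI)
  fix x e :: real
  assume x: "x \<in> {a..b}" and "0 < e"
  then obtain d where "0 < d" and small: "\<forall>(n::nat) (X::nat \<Rightarrow> real) (Y::nat \<Rightarrow> real).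
      (\<forall>i<n. a \<le> X i \<and> X i \<le> Y i \<and> Y i \<le> b) \<longrightarrow>
      (\<forall>i<n. \<forall>j<n. i \<noteq> j \<longrightarrow> Y i \<le> X j \<or> Y j \<le> X i) \<longrightarrow>
      (\<Sum>i<n. Y i - X i) < d \<longrightarrow> (\<Sum>i<n. \<bar>f (Y i) - f (X i)\<bar>) < e"
    using assms unfolding abs_continuous_on_def by blast
  have "dist (f y) (f x) < e" if "y \<in> {a..b}" "dist y x < d" for y
    using small[rule_format, of 1 "\<lambda>_. min x y" "\<lambda>_. max x y"] x that
    by (cases "x \<le> y") (auto simp: dist_real_def min_def max_def abs_minus_commute)
  with \<open>0 < d\<close> show "\<exists>d>0. \<forall>y\<in>{a..b}. dist y x < d \<longrightarrow> dist (f y) (f x) < e"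
    by blast
qed

lemma tagged_division_of_real_interval:
  fixes s t :: real
  assumes p: "p tagged_division_of {s..t}" and xK: "(x, K) \<in> p"
  shows "K = {Inf K..Sup K}" "Inf K \<le> x" "x \<le> Sup K" "s \<le> Inf K" "Sup K \<le> t"
    and "measure lborel K = Sup K - Inf K"
proof -
  obtain u v where K: "K = {u..v}"
    using tagged_division_ofD(4)[OF p xK] by (auto simp: cbox_interval)
  moreover have "x \<in> K" "K \<subseteq> {s..t}"
    using tagged_division_ofD(2,3)[OF p xK] by auto
  ultimately show "K = {Inf K..Sup K}" "Inf K \<le> x" "x \<le> Sup K" "s \<le> Inf K" "Sup K \<le> t"
    and "measure lborel K = Sup K - Inf K"
    by auto
qed

lemma tagged_division_of_real_nonoverlapping:
  fixes s t :: real
  assumes p: "p tagged_division_of {s..t}"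
    and xK: "(x, K) \<in> p" and yL: "(y, L) \<in> p" and "(x, K) \<noteq> (y, L)"
    and "Inf K < Sup K" "Inf L < Sup L"
  shows "Sup K \<le> Inf L \<or> Sup L \<le> Inf K"
proof (rule ccontr)
  assume "\<not> ?thesis"
  with \<open>Inf K < Sup K\<close> \<open>Inf L < Sup L\<close> have "max (Inf K) (Inf L) < min (Sup K) (Sup L)"
    by auto
  then obtain m where m: "max (Inf K) (Inf L) < m" "m < min (Sup K) (Sup L)"
    using dense by blast
  have "interior K = {Inf K<..<Sup K}" "interior L = {Inf L<..<Sup L}"
    using tagged_division_of_real_interval(1)[OF p xK] tagged_division_of_real_interval(1)[OF p yL]
    by (metis interior_atLeastAtMost_real)+
  with m have "m \<in> interior K \<inter> interior L"
    by auto
  with tagged_division_ofD(5)[OF p xK yL \<open>(x, K) \<noteq> (y, L)\<close>] show False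
    by blast
qed

lemma abs_continuous_on_finite_sum_less:
  fixes f :: "real \<Rightarrow> real"
  assumes "abs_continuous_on a b f" and "0 < \<epsilon>"
  shows "\<exists>\<delta>>0. \<forall>I (X::'i \<Rightarrow> real) Y. finite I \<longrightarrow>
    (\<forall>i\<in>I. a \<le> X i \<and> X i \<le> Y i \<and> Y i \<le> b) \<longrightarrow>
    (\<forall>i\<in>I. \<forall>j\<in>I. i \<noteq> j \<longrightarrow> Y i \<le> X j \<or> Y j \<le> X i) \<longrightarrow>
    (\<Sum>i\<in>I. Y i - X i) < \<delta> \<longrightarrow> (\<Sum>i\<in>I. \<bar>f (Y i) - f (X i)\<bar>) < \<epsilon>"
proof -
  obtain \<delta> where "0 < \<delta>" and small: "\<forall>(n::nat) (X::nat \<Rightarrow> real) (Y::nat \<Rightarrow> real).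
      (\<forall>i<n. a \<le> X i \<and> X i \<le> Y i \<and> Y i \<le> b) \<longrightarrow>
      (\<forall>i<n. \<forall>j<n. i \<noteq> j \<longrightarrow> Y i \<le> X j \<or> Y j \<le> X i) \<longrightarrow>
      (\<Sum>i<n. Y i - X i) < \<delta> \<longrightarrow> (\<Sum>i<n. \<bar>f (Y i) - f (X i)\<bar>) < \<epsilon>"
    using assms unfolding abs_continuous_on_def by blast
  have "(\<Sum>i\<in>I. \<bar>f (Y i) - f (X i)\<bar>) < \<epsilon>"
    if "finite I" and bounds: "\<forall>i\<in>I. a \<le> X i \<and> X i \<le> Y i \<and> Y i \<le> b"
      and disjoint: "\<forall>i\<in>I. \<forall>j\<in>I. i \<noteq> j \<longrightarrow> Y i \<le> X j \<or> Y j \<le> X i"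
      and "(\<Sum>i\<in>I. Y i - X i) < \<delta>"
    for I and X Y :: "'i \<Rightarrow> real"
  proof -
    obtain h where h: "bij_betw h {..<card I} I"
      using ex_bij_betw_nat_finite[OF \<open>finite I\<close>] by (auto simp: lessThan_atLeast0)
    then have "h k \<in> I" if "k < card I" for k
      using that by (auto simp: bij_betw_def)
    moreover have "h k \<noteq> h l" if "k < card I" "l < card I" "k \<noteq> l" for k l
      using h that by (auto simp: bij_betw_def inj_on_def)
    moreover have "(\<Sum>k<card I. Y (h k) - X (h k)) = (\<Sum>i\<in>I. Y i - X i)"
      using sum.reindex_bij_betw[OF h] .
    ultimately have "(\<Sum>k<card I. \<bar>f (Y (h k)) - f (X (h k))\<bar>) < \<epsilon>"
      using bounds disjoint \<open>(\<Sum>i\<in>I. Y i - X i) < \<delta>\<close>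
      by (intro small[THEN spec, THEN spec, THEN spec, THEN mp, THEN mp, THEN mp]) auto
    also have "(\<Sum>k<card I. \<bar>f (Y (h k)) - f (X (h k))\<bar>) = (\<Sum>i\<in>I. \<bar>f (Y i) - f (X i)\<bar>)"
      using sum.reindex_bij_betw[OF h] .
    finally show ?thesis .
  qed
  with \<open>0 < \<delta>\<close> show ?thesis
    by blast
qed

lemma abs_continuous_on_tagged_division_sum_less:
  fixes f :: "real \<Rightarrow> real"
  assumes "abs_continuous_on a b f" and "a \<le> s" "t \<le> b" and "0 < \<epsilon>"
  obtains \<delta> where "0 < \<delta>"
    "\<And>p B. p tagged_division_of {s..t} \<Longrightarrow> B \<subseteq> p \<Longrightarrow> (\<Sum>(x, K)\<in>B. measure lborel K) < \<delta> \<Longrightarrow>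
       (\<Sum>(x, K)\<in>B. \<bar>f (Sup K) - f (Inf K)\<bar>) < \<epsilon>"
proof -
  obtain \<delta> where "0 < \<delta>" and small: "\<forall>I (X::real \<times> real set \<Rightarrow> real) Y. finite I \<longrightarrow>
      (\<forall>i\<in>I. a \<le> X i \<and> X i \<le> Y i \<and> Y i \<le> b) \<longrightarrow>
      (\<forall>i\<in>I. \<forall>j\<in>I. i \<noteq> j \<longrightarrow> Y i \<le> X j \<or> Y j \<le> X i) \<longrightarrow>
      (\<Sum>i\<in>I. Y i - X i) < \<delta> \<longrightarrow> (\<Sum>i\<in>I. \<bar>f (Y i) - f (X i)\<bar>) < \<epsilon>"
    using abs_continuous_on_finite_sum_less[OF assms(1,4)] by blast
  show ?thesis
  proof (rule that[OF \<open>0 < \<delta>\<close>])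
    fix p B
    assume p: "p tagged_division_of {s..t}" and "B \<subseteq> p"
      and B_small: "(\<Sum>(x, K)\<in>B. measure lborel K) < \<delta>"
    have iv: "Inf K \<le> Sup K" "s \<le> Inf K" "Sup K \<le> t" "measure lborel K = Sup K - Inf K"
      if "(x, K) \<in> B" for x K
      using tagged_division_of_real_interval(2-6)[OF p, of x K] that \<open>B \<subseteq> p\<close> by auto
    \<comment> \<open>Degenerate intervals contribute nothing, and the others do not overlap.\<close>
    define B' where "B' = {(x, K) \<in> B. Inf K < Sup K}"
    have "finite B" using p \<open>B \<subseteq> p\<close> finite_subset by blast
    then have "finite B'" "B' \<subseteq> B" unfolding B'_def by (auto intro: rev_finite_subset)
    have "(\<Sum>(x, K)\<in>B'. Sup K - Inf K) = (\<Sum>(x, K)\<in>B'. measure lborel K)"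
      using iv(4) \<open>B' \<subseteq> B\<close> by (auto intro!: sum.cong)
    also have "\<dots> \<le> (\<Sum>(x, K)\<in>B. measure lborel K)"
      using \<open>finite B\<close> \<open>B' \<subseteq> B\<close> by (intro sum_mono2) auto
    finally have lengths: "(\<Sum>z\<in>B'. Sup (snd z) - Inf (snd z)) < \<delta>"
      using B_small by (simp add: case_prod_beta)
    have "(\<Sum>z\<in>B'. \<bar>f (Sup (snd z)) - f (Inf (snd z))\<bar>) < \<epsilon>"
    proof (rule small[rule_format, OF \<open>finite B'\<close> _ _ lengths])
      fix z assume "z \<in> B'"
      moreover obtain x K where "z = (x, K)" by fastforce
      ultimately show "a \<le> Inf (snd z) \<and> Inf (snd z) \<le> Sup (snd z) \<and> Sup (snd z) \<le> b"
        using iv[of x K] \<open>a \<le> s\<close> \<open>t \<le> b\<close> \<open>B' \<subseteq> B\<close> by auto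
    next
      fix z w assume "z \<in> B'" "w \<in> B'" "z \<noteq> w"
      moreover obtain x K y L where "z = (x, K)" "w = (y, L)" by fastforce
      ultimately show "Sup (snd z) \<le> Inf (snd w) \<or> Sup (snd w) \<le> Inf (snd z)"
        using tagged_division_of_real_nonoverlapping[OF p, of x K y L] \<open>B \<subseteq> p\<close>
        unfolding B'_def by auto
    qed
    then have "(\<Sum>(x, K)\<in>B'. \<bar>f (Sup K) - f (Inf K)\<bar>) < \<epsilon>"
      by (simp add: case_prod_beta)
    moreover have "(\<Sum>(x, K)\<in>B'. \<bar>f (Sup K) - f (Inf K)\<bar>) = (\<Sum>(x, K)\<in>B. \<bar>f (Sup K) - f (Inf K)\<bar>)"
    proof (rule sum.mono_neutral_left[OF \<open>finite B\<close> \<open>B' \<subseteq> B\<close>], rule ballI)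
      fix z assume z: "z \<in> B - B'"
      moreover obtain x K where "z = (x, K)" by fastforce
      ultimately have "Sup K = Inf K"
        using iv(1)[of x K] unfolding B'_def by auto
      with \<open>z = (x, K)\<close> show "(\<lambda>(x, K). \<bar>f (Sup K) - f (Inf K)\<bar>) z = 0"
        by simp
    qed
    ultimately show "(\<Sum>(x, K)\<in>B. \<bar>f (Sup K) - f (Inf K)\<bar>) < \<epsilon>"
      by simp
  qed
qed

lemma negligible_tagged_content_less:
  fixes E :: "real set"
  assumes "negligible E" and "0 < \<delta>"
  obtains \<gamma> where "gauge \<gamma>"
    "\<And>p. p tagged_division_of {s..t} \<Longrightarrow> \<gamma> fine p \<Longrightarrow> (\<Sum>(x, K)\<in>{z \<in> p. fst z \<in> E}. measure lborel K) < \<delta>"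
proof -
  have "(indicat_real E has_integral 0) {s..t}"
    using assms(1) negligible by blast
  from has_integral_real[THEN iffD1, rule_format, OF this assms(2)]
  obtain \<gamma> where "gauge \<gamma>" and \<gamma>: "\<forall>p. p tagged_division_of {s..t} \<and> \<gamma> fine p \<longrightarrow>
      norm ((\<Sum>(x, K)\<in>p. measure lborel K *\<^sub>R indicat_real E x) - 0) < \<delta>"
    by blast
  show ?thesis
  proof (rule that[OF \<open>gauge \<gamma>\<close>])
    fix p assume p: "p tagged_division_of {s..t}" "\<gamma> fine p"
    then have "finite p" by blast
    then have "(\<Sum>(x, K)\<in>{z \<in> p. fst z \<in> E}. measure lborel K)
        = (\<Sum>(x, K)\<in>p. measure lborel K *\<^sub>R indicat_real E x)"
      by (subst sum.inter_filter) (auto intro!: sum.cong simp: indicator_def)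
    with \<gamma> p show "(\<Sum>(x, K)\<in>{z \<in> p. fst z \<in> E}. measure lborel K) < \<delta>"
      by auto
  qed
qed

lemma has_real_derivative_dominated_increment:
  fixes f P :: "real \<Rightarrow> real"
  assumes f: "(f has_real_derivative f') (at x)" and P: "(P has_real_derivative L) (at x)"
    and "\<bar>f'\<bar> \<le> L" and "0 < \<eta>"
  obtains d where "0 < d"
    "\<And>u v. u \<in> ball x d \<Longrightarrow> v \<in> ball x d \<Longrightarrow> u \<le> x \<Longrightarrow> x \<le> v \<Longrightarrow>
       \<bar>f v - f u\<bar> \<le> P v - P u + 2 * \<eta> * (v - u)"
proof -
  have approx: "\<exists>d>0. \<forall>y. \<bar>y - x\<bar> < d \<longrightarrow> \<bar>F y - F x - D * (y - x)\<bar> \<le> \<eta> * \<bar>y - x\<bar>"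
    if "(F has_real_derivative D) (at x)" for F D
    using that \<open>0 < \<eta>\<close> unfolding has_field_derivative_def has_derivative_at_alt by (simp add: mult.commute)
  obtain d1 where "0 < d1" and d1: "\<And>y. \<bar>y - x\<bar> < d1 \<Longrightarrow> \<bar>f y - f x - f' * (y - x)\<bar> \<le> \<eta> * \<bar>y - x\<bar>"
    using approx[OF f] by blast
  obtain d2 where "0 < d2" and d2: "\<And>y. \<bar>y - x\<bar> < d2 \<Longrightarrow> \<bar>P y - P x - L * (y - x)\<bar> \<le> \<eta> * \<bar>y - x\<bar>"
    using approx[OF P] by blast
  show ?thesis
  proof (rule that[of "min d1 d2"])
    fix u v assume "u \<in> ball x (min d1 d2)" "v \<in> ball x (min d1 d2)" "u \<le> x" "x \<le> v"
    then have "\<bar>u - x\<bar> < d1" "\<bar>v - x\<bar> < d1" "\<bar>u - x\<bar> < d2" "\<bar>v - x\<bar> < d2"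
      by (auto simp: dist_real_def)
    moreover have "\<bar>v - x\<bar> = v - x" "\<bar>u - x\<bar> = x - u"
      using \<open>u \<le> x\<close> \<open>x \<le> v\<close> by auto
    ultimately have "\<bar>f v - f x - f' * (v - x)\<bar> \<le> \<eta> * (v - x)" "\<bar>f u - f x - f' * (u - x)\<bar> \<le> \<eta> * (x - u)"
      and "\<bar>P v - P x - L * (v - x)\<bar> \<le> \<eta> * (v - x)" "\<bar>P u - P x - L * (u - x)\<bar> \<le> \<eta> * (x - u)"
      using d1[of v] d1[of u] d2[of v] d2[of u] by simp_all
    moreover have "f' * (v - u) = f' * (v - x) - f' * (u - x)" "L * (v - u) = L * (v - x) - L * (u - x)"
      and "\<eta> * (v - u) = \<eta> * (v - x) + \<eta> * (x - u)" "2 * \<eta> * (v - u) = 2 * (\<eta> * (v - u))"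
      by (simp_all add: algebra_simps)
    moreover have "\<bar>f' * (v - u)\<bar> \<le> L * (v - u)"
      using \<open>\<bar>f'\<bar> \<le> L\<close> \<open>u \<le> x\<close> \<open>x \<le> v\<close> by (simp add: abs_mult mult_right_mono)
    ultimately show "\<bar>f v - f u\<bar> \<le> P v - P u + 2 * \<eta> * (v - u)"
      unfolding abs_le_iff by linarith
  qed (use \<open>0 < d1\<close> \<open>0 < d2\<close> in auto)
qed

lemma dominated_increment_gauge:
  fixes f f' L P :: "real \<Rightarrow> real"
  assumes der: "\<And>x. x \<in> S \<Longrightarrow> (f has_real_derivative f' x) (at x)"
    and P: "\<And>x. x \<in> S \<Longrightarrow> (P has_real_derivative L x) (at x)"
    and dom: "\<And>x. x \<in> S \<Longrightarrow> \<bar>f' x\<bar> \<le> L x" and "0 < \<eta>"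
  obtains \<gamma> where "gauge \<gamma>"
    "\<And>x u v. x \<in> S \<Longrightarrow> {u..v} \<subseteq> \<gamma> x \<Longrightarrow> u \<le> x \<Longrightarrow> x \<le> v \<Longrightarrow>
       \<bar>f v - f u\<bar> \<le> P v - P u + 2 * \<eta> * (v - u)"
proof -
  have "\<forall>x\<in>S. \<exists>d>0. \<forall>u v. u \<in> ball x d \<longrightarrow> v \<in> ball x d \<longrightarrow> u \<le> x \<longrightarrow> x \<le> v \<longrightarrow>
      \<bar>f v - f u\<bar> \<le> P v - P u + 2 * \<eta> * (v - u)"
    using has_real_derivative_dominated_increment[OF der P dom \<open>0 < \<eta>\<close>] by metis
  then obtain d where d: "\<And>x. x \<in> S \<Longrightarrow> 0 < d x"
    and incr: "\<And>x u v. x \<in> S \<Longrightarrow> u \<in> ball x (d x) \<Longrightarrow> v \<in> ball x (d x) \<Longrightarrow> u \<le> x \<Longrightarrow> x \<le> v \<Longrightarrow>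
      \<bar>f v - f u\<bar> \<le> P v - P u + 2 * \<eta> * (v - u)"
    by metis
  define \<gamma> where "\<gamma> x = (if x \<in> S then ball x (d x) else UNIV)" for x
  show ?thesis
  proof (rule that)
    show "gauge \<gamma>"
      using d unfolding gauge_def \<gamma>_def by auto
    fix x u v assume "x \<in> S" "{u..v} \<subseteq> \<gamma> x" "u \<le> x" "x \<le> v"
    moreover have "\<gamma> x = ball x (d x)"
      using \<open>x \<in> S\<close> by (simp add: \<gamma>_def)
    moreover have "u \<in> {u..v}" "v \<in> {u..v}"
      using \<open>u \<le> x\<close> \<open>x \<le> v\<close> by auto
    ultimately have "u \<in> ball x (d x)" "v \<in> ball x (d x)"
      by blast+
    with incr \<open>x \<in> S\<close> \<open>u \<le> x\<close> \<open>x \<le> v\<close> show "\<bar>f v - f u\<bar> \<le> P v - P u + 2 * \<eta> * (v - u)"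
      by blast
  qed
qed

lemma tagged_division_increment_le:
  fixes f P :: "real \<Rightarrow> real"
  assumes "s \<le> t" and p: "p tagged_division_of {s..t}"
    and good: "\<And>x K. (x, K) \<in> p \<Longrightarrow> x \<notin> E \<Longrightarrow>
      \<bar>f (Sup K) - f (Inf K)\<bar> \<le> P (Sup K) - P (Inf K) + c * (Sup K - Inf K)"
    and bad: "\<And>x K. (x, K) \<in> p \<Longrightarrow> x \<in> E \<Longrightarrow> 0 \<le> P (Sup K) - P (Inf K) + c * (Sup K - Inf K)"
  shows "\<bar>f t - f s\<bar> \<le> P t - P s + c * (t - s) + (\<Sum>(x, K)\<in>{z \<in> p. fst z \<in> E}. \<bar>f (Sup K) - f (Inf K)\<bar>)"
proof -
  have "finite p" using p by blast
  have split_bound: "\<bar>f (Sup K) - f (Inf K)\<bar> \<le> P (Sup K) - P (Inf K) + c * (Sup K - Inf K)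
      + (if x \<in> E then \<bar>f (Sup K) - f (Inf K)\<bar> else 0)" if "(x, K) \<in> p" for x K
    by (cases "x \<in> E") (use good[OF that] bad[OF that] in auto)
  have "\<bar>f t - f s\<bar> \<le> (\<Sum>(x, K)\<in>p. \<bar>f (Sup K) - f (Inf K)\<bar>)"
    using additive_tagged_division_1[OF \<open>s \<le> t\<close> p, of f] sum_abs[of _ p]
    by (metis (no_types, lifting) case_prod_beta' sum.cong)
  also have "\<dots> \<le> (\<Sum>(x, K)\<in>p. P (Sup K) - P (Inf K)) + c * (\<Sum>(x, K)\<in>p. Sup K - Inf K)
      + (\<Sum>(x, K)\<in>p. if x \<in> E then \<bar>f (Sup K) - f (Inf K)\<bar> else 0)"
    unfolding sum_distrib_left sum.distrib[symmetric]
    by (intro sum_mono) (simp only: split_paired_all case_prod_conv split_bound)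
  also have "\<dots> = P t - P s + c * (t - s) + (\<Sum>(x, K)\<in>{z \<in> p. fst z \<in> E}. \<bar>f (Sup K) - f (Inf K)\<bar>)"
    using additive_tagged_division_1[OF \<open>s \<le> t\<close> p, of P] additive_tagged_division_1[OF \<open>s \<le> t\<close> p, of "\<lambda>x. x"]
      \<open>finite p\<close> by (simp add: sum.inter_filter case_prod_beta)
  finally show ?thesis .
qed

lemma abs_continuous_increment_le:
  fixes f f' L P :: "real \<Rightarrow> real"
  assumes "a \<le> s" "s \<le> t" "t \<le> b" and ac: "abs_continuous_on a b f"
    and f': "AE x in lborel. x \<in> {s..t} \<longrightarrow> (f has_real_derivative f' x) (at x)"
    and dom: "\<And>x. x \<in> {s..t} \<Longrightarrow> \<bar>f' x\<bar> \<le> L x"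
    and P: "\<And>x. x \<in> {s..t} \<Longrightarrow> (P has_real_derivative L x) (at x)"
  shows "\<bar>f t - f s\<bar> \<le> P t - P s"
proof (rule field_le_epsilon)
  fix e :: real assume "0 < e"
  define \<eta> where "\<eta> = e / (2 * (t - s) + 1)"
  have "0 < 2 * (t - s) + 1"
    using \<open>s \<le> t\<close> by simp
  then have "0 < \<eta>" and "\<eta> * (2 * (t - s) + 1) = e"
    using \<open>0 < e\<close> by (simp_all add: \<eta>_def)
  then have "2 * \<eta> * (t - s) + \<eta> = e"
    by (simp add: algebra_simps)
  have "AE x in lebesgue. x \<in> {s..t} \<longrightarrow> (f has_real_derivative f' x) (at x)"
    using f' by (rule AE_completion)
  then obtain E where "negligible E"
    and der: "\<And>x. x \<in> {s..t} - E \<Longrightarrow> (f has_real_derivative f' x) (at x)"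
    unfolding eventually_ae_filter_negligible by blast
  obtain \<delta> where "0 < \<delta>" and small_var: "\<And>p B. p tagged_division_of {s..t} \<Longrightarrow> B \<subseteq> p \<Longrightarrow>
      (\<Sum>(x, K)\<in>B. measure lborel K) < \<delta> \<Longrightarrow> (\<Sum>(x, K)\<in>B. \<bar>f (Sup K) - f (Inf K)\<bar>) < \<eta>"
    using abs_continuous_on_tagged_division_sum_less[OF ac \<open>a \<le> s\<close> \<open>t \<le> b\<close> \<open>0 < \<eta>\<close>] by blast
  obtain \<gamma>\<^sub>E where "gauge \<gamma>\<^sub>E" and small_E: "\<And>p. p tagged_division_of {s..t} \<Longrightarrow> \<gamma>\<^sub>E fine p \<Longrightarrow>
      (\<Sum>(x, K)\<in>{z \<in> p. fst z \<in> E}. measure lborel K) < \<delta>"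
    using negligible_tagged_content_less[OF \<open>negligible E\<close> \<open>0 < \<delta>\<close>] by blast
  have P': "\<And>x. x \<in> {s..t} - E \<Longrightarrow> (P has_real_derivative L x) (at x)"
    and dom': "\<And>x. x \<in> {s..t} - E \<Longrightarrow> \<bar>f' x\<bar> \<le> L x"
    using P dom by auto
  obtain \<gamma>\<^sub>D where "gauge \<gamma>\<^sub>D" and incr: "\<And>x u v. x \<in> {s..t} - E \<Longrightarrow> {u..v} \<subseteq> \<gamma>\<^sub>D x \<Longrightarrow>
      u \<le> x \<Longrightarrow> x \<le> v \<Longrightarrow> \<bar>f v - f u\<bar> \<le> P v - P u + 2 * \<eta> * (v - u)"
    using dominated_increment_gauge[OF der P' dom' \<open>0 < \<eta>\<close>] by blast
  obtain p where p: "p tagged_division_of {s..t}" and fine: "(\<lambda>x. \<gamma>\<^sub>E x \<inter> \<gamma>\<^sub>D x) fine p"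
    using fine_division_exists_real[OF gauge_Int[OF \<open>gauge \<gamma>\<^sub>E\<close> \<open>gauge \<gamma>\<^sub>D\<close>]] by blast
  have P_mono: "P u \<le> P v" if "s \<le> u" "u \<le> v" "v \<le> t" for u v
    using that dom P by (intro DERIV_nonneg_imp_nondecreasing[OF \<open>u \<le> v\<close>]) (meson abs_ge_zero atLeastAtMost_iff order_trans)
  \<comment> \<open>Tags outside E are handled by differentiability; the intervals tagged in E have small
    total length, so absolute continuity makes their contribution small.\<close>
  have "\<bar>f t - f s\<bar> \<le> P t - P s + 2 * \<eta> * (t - s) + (\<Sum>(x, K)\<in>{z \<in> p. fst z \<in> E}. \<bar>f (Sup K) - f (Inf K)\<bar>)"
  proof (rule tagged_division_increment_le[OF \<open>s \<le> t\<close> p])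
    fix x K assume "(x, K) \<in> p"
    note K = tagged_division_of_real_interval[OF p this]
    show "0 \<le> P (Sup K) - P (Inf K) + 2 * \<eta> * (Sup K - Inf K)"
      using P_mono[of "Inf K" "Sup K"] K \<open>0 < \<eta>\<close> by auto
    assume "x \<notin> E"
    have "{Inf K..Sup K} \<subseteq> \<gamma>\<^sub>D x"
      using fineD[OF fine \<open>(x, K) \<in> p\<close>] K(1) by auto
    then show "\<bar>f (Sup K) - f (Inf K)\<bar> \<le> P (Sup K) - P (Inf K) + 2 * \<eta> * (Sup K - Inf K)"
      using incr[of x "Inf K" "Sup K"] K \<open>x \<notin> E\<close> by auto
  qed
  also have "\<dots> < P t - P s + 2 * \<eta> * (t - s) + \<eta>"
    using small_var[OF p _ small_E[OF p]] fine by (auto simp: fine_Int)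
  finally show "\<bar>f t - f s\<bar> \<le> P t - P s + e"
    using \<open>2 * \<eta> * (t - s) + \<eta> = e\<close> by linarith
qed

definition chord_primitive :: "real \<Rightarrow> real \<Rightarrow> real \<Rightarrow> real \<Rightarrow> real \<Rightarrow> real" where
  "chord_primitive u v A B x = A * (x - u) + (B - A) / (v - u) * (x - u)\<^sup>2 / 2"

lemma chord_primitive_has_real_derivative:
  "(chord_primitive u v A B has_real_derivative A + (B - A) / (v - u) * (x - u)) (at x)"
proof -
  have "((\<lambda>x. A * (x - u) + k * (x - u)\<^sup>2 / 2) has_real_derivative A + k * (x - u)) (at x)" for k
    by (auto intro!: derivative_eq_intros)
  then show ?thesis
    unfolding chord_primitive_def[abs_def] .
qed

lemma chord_primitive_left_end: "chord_primitive u v A B u = 0"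
  by (simp add: chord_primitive_def)

lemma chord_primitive_right_end: "chord_primitive u v A B v = (v - u) * (A + B) / 2"
  by (cases "u = v") (simp_all add: chord_primitive_def power2_eq_square field_simps)

lemma chord_primitive_has_integral:
  assumes "u \<le> v"
  shows "(chord_primitive u v A B has_integral (v - u)\<^sup>2 * (A / 3 + B / 6)) {u..v}"
proof -
  define k where "k = (B - A) / (v - u)"
  define Q where "Q x = A * (x - u)\<^sup>2 / 2 + k * (x - u) ^ 3 / 6" for x
  have "(Q has_real_derivative chord_primitive u v A B x) (at x)" for x
    unfolding Q_def chord_primitive_def k_def[symmetric]
    by (auto intro!: derivative_eq_intros simp: power2_eq_square)
  then have "(chord_primitive u v A B has_integral Q v - Q u) {u..v}"
    by (intro fundamental_theorem_of_calculus[OF assms])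
       (simp add: has_real_derivative_iff_has_vector_derivative has_vector_derivative_at_within)
  moreover have "Q v - Q u = (v - u)\<^sup>2 * (A / 3 + B / 6)"
    by (cases "u = v") (simp_all add: Q_def k_def power2_eq_square power3_eq_cube field_simps)
  ultimately show ?thesis
    by simp
qed

lemma abs_continuous_increment_le_chord_primitive:
  fixes f f' :: "real \<Rightarrow> real"
  assumes "a \<le> u" "u \<le> s" "s \<le> t" "t \<le> v" "v \<le> b" and ac: "abs_continuous_on a b f"
    and f': "AE x in lborel. x \<in> {u..v} \<longrightarrow> (f has_real_derivative f' x) (at x)"
    and cvx: "convex_on {u..v} (\<lambda>x. \<bar>f' x\<bar>)"
  shows "\<bar>f t - f s\<bar> \<le> chord_primitive u v (\<bar>f' u\<bar>) (\<bar>f' v\<bar>) t - chord_primitive u v (\<bar>f' u\<bar>) (\<bar>f' v\<bar>) s"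
proof (rule abs_continuous_increment_le[OF _ \<open>s \<le> t\<close> _ ac])
  show "AE x in lborel. x \<in> {s..t} \<longrightarrow> (f has_real_derivative f' x) (at x)"
    using f' by (rule eventually_mono) (use assms in auto)
  show "\<bar>f' x\<bar> \<le> \<bar>f' u\<bar> + (\<bar>f' v\<bar> - \<bar>f' u\<bar>) / (v - u) * (x - u)" if "x \<in> {s..t}" for x
    using convex_onD_Icc'[OF cvx, of x] that assms by (auto simp: algebra_simps)
qed (use assms chord_primitive_has_real_derivative in auto)

lemma integral_dominated_by_left_increment_le:
  fixes f f' F :: "real \<Rightarrow> real"
  assumes "a \<le> u" "u \<le> v" "v \<le> b" and ac: "abs_continuous_on a b f"
    and f': "AE x in lborel. x \<in> {u..v} \<longrightarrow> (f has_real_derivative f' x) (at x)"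
    and cvx: "convex_on {u..v} (\<lambda>x. \<bar>f' x\<bar>)"
    and F: "F integrable_on {u..v}" "\<And>x. x \<in> {u..v} \<Longrightarrow> \<bar>F x\<bar> \<le> \<bar>f x - f u\<bar>"
  shows "\<bar>integral {u..v} F\<bar> \<le> (v - u)\<^sup>2 * (\<bar>f' u\<bar> / 3 + \<bar>f' v\<bar> / 6)"
proof -
  let ?P = "chord_primitive u v (\<bar>f' u\<bar>) (\<bar>f' v\<bar>)"
  have "\<bar>F x\<bar> \<le> ?P x - ?P u" if "x \<in> {u..v}" for x
    using that assms
    by (intro order_trans[OF F(2)[OF that] abs_continuous_increment_le_chord_primitive[OF _ _ _ _ _ ac f' cvx]]) auto
  then have "\<bar>F x\<bar> \<le> ?P x" if "x \<in> {u..v}" for x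
    using that by (simp add: chord_primitive_left_end)
  then have "norm (integral {u..v} F) \<le> integral {u..v} ?P"
    using chord_primitive_has_integral[OF \<open>u \<le> v\<close>]
    by (intro integral_norm_bound_integral[OF F(1)]) (auto simp: has_integral_integrable)
  then show ?thesis
    using integral_unique[OF chord_primitive_has_integral[OF \<open>u \<le> v\<close>]] by simp
qed

lemma integral_dominated_by_right_increment_le:
  fixes f f' F :: "real \<Rightarrow> real"
  assumes "a \<le> u" "u \<le> v" "v \<le> b" and ac: "abs_continuous_on a b f"
    and f': "AE x in lborel. x \<in> {u..v} \<longrightarrow> (f has_real_derivative f' x) (at x)"
    and cvx: "convex_on {u..v} (\<lambda>x. \<bar>f' x\<bar>)"
    and F: "F integrable_on {u..v}" "\<And>x. x \<in> {u..v} \<Longrightarrow> \<bar>F x\<bar> \<le> \<bar>f x - f v\<bar>"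
  shows "\<bar>integral {u..v} F\<bar> \<le> (v - u)\<^sup>2 * (\<bar>f' u\<bar> / 6 + \<bar>f' v\<bar> / 3)"
proof -
  let ?P = "chord_primitive u v (\<bar>f' u\<bar>) (\<bar>f' v\<bar>)"
  have int: "((\<lambda>x. ?P v - ?P x) has_integral (v - u)\<^sup>2 * (\<bar>f' u\<bar> / 6 + \<bar>f' v\<bar> / 3)) {u..v}"
  proof -
    have "((\<lambda>x. ?P v - ?P x) has_integral (v - u) * ?P v - (v - u)\<^sup>2 * (\<bar>f' u\<bar> / 3 + \<bar>f' v\<bar> / 6)) {u..v}"
      using has_integral_diff[OF has_integral_const_real[of "?P v" u v] chord_primitive_has_integral[OF \<open>u \<le> v\<close>]]
        \<open>u \<le> v\<close> by (simp add: mult.commute)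
    moreover have "(v - u) * ?P v - (v - u)\<^sup>2 * (\<bar>f' u\<bar> / 3 + \<bar>f' v\<bar> / 6)
        = (v - u)\<^sup>2 * (\<bar>f' u\<bar> / 6 + \<bar>f' v\<bar> / 3)"
      unfolding chord_primitive_right_end by (simp add: power2_eq_square field_simps)
    ultimately show ?thesis
      by simp
  qed
  have "\<bar>F x\<bar> \<le> ?P v - ?P x" if "x \<in> {u..v}" for x
    using that assms F(2)[OF that, unfolded abs_minus_commute[of "f x"]]
    by (intro order_trans[OF _ abs_continuous_increment_le_chord_primitive[OF _ _ _ _ _ ac f' cvx]]) auto
  then have "norm (integral {u..v} F) \<le> integral {u..v} (\<lambda>x. ?P v - ?P x)"
    using int by (intro integral_norm_bound_integral[OF F(1)]) (auto simp: has_integral_integrable)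
  then show ?thesis
    using int by (simp add: integral_unique)
qed

lemma integrable_on_continuous_mult_nonneg:
  fixes f g :: "real \<Rightarrow> real"
  assumes f: "continuous_on {a..b} f" and g: "g integrable_on {a..b}"
    and g_nonneg: "\<And>t. t \<in> {a..b} \<Longrightarrow> 0 \<le> g t"
  shows "(\<lambda>t. f t * g t) integrable_on {a..b}"
proof -
  have "g absolutely_integrable_on {a..b}"
    using nonnegative_absolutely_integrable_1[OF g] g_nonneg by blast
  moreover have "f \<in> borel_measurable (lebesgue_on {a..b})"
    using f by (intro continuous_imp_measurable_on_sets_lebesgue) auto
  moreover have "bounded (f ` {a..b})"
    using f by (intro compact_imp_bounded compact_continuous_image) auto
  ultimately have "(\<lambda>t. f t * g t) absolutely_integrable_on {a..b}"
    by (intro absolutely_integrable_bounded_measurable_product_real) auto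
  then show ?thesis
    using set_lebesgue_integral_eq_integral(1) by blast
qed

lemma integral_unit_valued_bounds:
  fixes g :: "real \<Rightarrow> real"
  assumes "a \<le> b" and g: "g integrable_on {a..b}" and g01: "\<And>t. t \<in> {a..b} \<Longrightarrow> 0 \<le> g t \<and> g t \<le> 1"
  shows "0 \<le> integral {a..b} g" "integral {a..b} g \<le> b - a"
proof -
  show "0 \<le> integral {a..b} g"
    using g g01 by (intro integral_nonneg) auto
  have "integral {a..b} g \<le> integral {a..b} (\<lambda>_. 1)"
    using g g01 by (intro integral_le) auto
  then show "integral {a..b} g \<le> b - a"
    using \<open>a \<le> b\<close> by simp
qed

lemma increment_mult_weight:
  fixes f w :: "real \<Rightarrow> real"
  assumes f: "continuous_on {a..b} f" and w: "w integrable_on {a..b}"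
    and w01: "\<And>t. t \<in> {a..b} \<Longrightarrow> 0 \<le> w t \<and> w t \<le> 1" and "a \<le> u" "v \<le> b"
  shows "(\<lambda>t. (f t - f c) * w t) integrable_on {u..v}"
    and "\<And>t. t \<in> {u..v} \<Longrightarrow> \<bar>(f t - f c) * w t\<bar> \<le> \<bar>f t - f c\<bar>"
proof -
  have "(\<lambda>t. (f t - f c) * w t) integrable_on {a..b}"
    using f w w01 by (intro integrable_on_continuous_mult_nonneg continuous_intros) auto
  then show "(\<lambda>t. (f t - f c) * w t) integrable_on {u..v}"
    by (rule integrable_on_subinterval) (use assms in auto)
  show "\<bar>(f t - f c) * w t\<bar> \<le> \<bar>f t - f c\<bar>" if "t \<in> {u..v}" for t
  proof -
    have "0 \<le> w t" "w t \<le> 1"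
      using w01[of t] that assms by auto
    then show ?thesis
      by (simp add: abs_mult mult_right_le_one_le)
  qed
qed

lemma steffensen_remainder_split:
  fixes f g :: "real \<Rightarrow> real"
  assumes "a \<le> c" "c \<le> b" and f: "f integrable_on {a..b}" and g: "g integrable_on {a..b}"
    and fg: "(\<lambda>t. f t * g t) integrable_on {a..b}" and lam: "integral {a..b} g = c - a"
  shows "integral {a..c} f - integral {a..b} (\<lambda>t. f t * g t)
    = integral {a..c} (\<lambda>t. (f t - f c) * (1 - g t)) - integral {c..b} (\<lambda>t. (f t - f c) * g t)"
proof -
  have sub: "h integrable_on {u..v}" if "h integrable_on {a..b}" "a \<le> u" "v \<le> b" for h :: "real \<Rightarrow> real" and u v
    using integrable_on_subinterval[OF that(1), of u v] that by auto
  have const: "((\<lambda>t. f c) has_integral (c - a) * f c) {a..c}"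
    using has_integral_const_real[of "f c" a c] \<open>a \<le> c\<close> by simp
  have "((\<lambda>t. f t - f t * g t - f c + f c * g t) has_integral
      integral {a..c} f - integral {a..c} (\<lambda>t. f t * g t) - (c - a) * f c + f c * integral {a..c} g) {a..c}"
    using sub[OF f] sub[OF g] sub[OF fg] \<open>c \<le> b\<close>
    by (intro has_integral_add has_integral_diff has_integral_mult_right integrable_integral const) auto
  then have left: "integral {a..c} (\<lambda>t. (f t - f c) * (1 - g t))
      = integral {a..c} f - integral {a..c} (\<lambda>t. f t * g t) - (c - a) * f c + f c * integral {a..c} g"
    using \<open>a \<le> c\<close> by (intro integral_unique) (simp add: algebra_simps)
  have "((\<lambda>t. f t * g t - f c * g t) has_integral
      integral {c..b} (\<lambda>t. f t * g t) - f c * integral {c..b} g) {c..b}"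
    using sub[OF g] sub[OF fg] \<open>a \<le> c\<close>
    by (intro has_integral_diff has_integral_mult_right integrable_integral) auto
  then have right: "integral {c..b} (\<lambda>t. (f t - f c) * g t)
      = integral {c..b} (\<lambda>t. f t * g t) - f c * integral {c..b} g"
    by (intro integral_unique) (simp add: algebra_simps)
  have "f c * integral {a..c} g + f c * integral {c..b} g = (c - a) * f c"
    using Henstock_Kurzweil_Integration.integral_combine[OF \<open>a \<le> c\<close> \<open>c \<le> b\<close> g] lam
    by (simp add: distrib_left[symmetric] mult.commute)
  moreover have "integral {a..c} (\<lambda>t. f t * g t) + integral {c..b} (\<lambda>t. f t * g t) = integral {a..b} (\<lambda>t. f t * g t)"
    using Henstock_Kurzweil_Integration.integral_combine[OF \<open>a \<le> c\<close> \<open>c \<le> b\<close> fg] .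
  ultimately show ?thesis
    unfolding left right by linarith
qed

lemma steffensen_gap_left_le:
  fixes f f' g :: "real \<Rightarrow> real"
  assumes "a \<le> b" and ac: "abs_continuous_on a b f"
    and f': "AE t in lborel. t \<in> {a..b} \<longrightarrow> (f has_real_derivative f' t) (at t)"
    and cvx: "convex_on {a..b} (\<lambda>t. \<bar>f' t\<bar>)"
    and g: "g integrable_on {a..b}" and g01: "\<And>t. t \<in> {a..b} \<Longrightarrow> 0 \<le> g t \<and> g t \<le> 1"
  defines "lam \<equiv> integral {a..b} g"
  shows "\<bar>integral {a..a + lam} f - integral {a..b} (\<lambda>t. f t * g t)\<bar>
    \<le> 1/6 * lam^2 * \<bar>f' a\<bar> + 1/3 * (lam^2 + (b - a - lam)^2) * \<bar>f' (a + lam)\<bar>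
      + 1/6 * (b - a - lam)^2 * \<bar>f' b\<bar>"
proof -
  define c where "c = a + lam"
  have "a \<le> c" "c \<le> b"
    using integral_unit_valued_bounds[OF \<open>a \<le> b\<close> g g01] unfolding c_def lam_def by auto
  have f_cont: "continuous_on {a..b} f"
    using ac by (rule abs_continuous_on_imp_continuous_on)
  have g': "(\<lambda>t. 1 - g t) integrable_on {a..b}" and g'01: "\<And>t. t \<in> {a..b} \<Longrightarrow> 0 \<le> 1 - g t \<and> 1 - g t \<le> 1"
    using g g01 by (auto intro: integrable_diff integrable_const_ivl)
  have f'_sub: "AE t in lborel. t \<in> {u..v} \<longrightarrow> (f has_real_derivative f' t) (at t)"
    if "a \<le> u" "v \<le> b" for u v
    using f' by (rule eventually_mono) (use that in auto)
  have cvx_sub: "convex_on {u..v} (\<lambda>t. \<bar>f' t\<bar>)" if "a \<le> u" "v \<le> b" for u v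
    using cvx by (rule convex_on_subset) (use that in auto)
  have left: "\<bar>integral {a..c} (\<lambda>t. (f t - f c) * (1 - g t))\<bar> \<le> (c - a)\<^sup>2 * (\<bar>f' a\<bar> / 6 + \<bar>f' c\<bar> / 3)"
    by (rule integral_dominated_by_right_increment_le[OF order.refl \<open>a \<le> c\<close> \<open>c \<le> b\<close> ac f'_sub cvx_sub])
      (use increment_mult_weight[where c = c, OF f_cont g' g'01 order.refl \<open>c \<le> b\<close>] \<open>a \<le> c\<close> \<open>c \<le> b\<close> in auto)
  have right: "\<bar>integral {c..b} (\<lambda>t. (f t - f c) * g t)\<bar> \<le> (b - c)\<^sup>2 * (\<bar>f' c\<bar> / 3 + \<bar>f' b\<bar> / 6)"
    by (rule integral_dominated_by_left_increment_le[OF \<open>a \<le> c\<close> \<open>c \<le> b\<close> order.refl ac f'_sub cvx_sub])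
      (use increment_mult_weight[where c = c, OF f_cont g g01 \<open>a \<le> c\<close> order.refl] \<open>a \<le> c\<close> \<open>c \<le> b\<close> in auto)
  have split: "integral {a..c} f - integral {a..b} (\<lambda>t. f t * g t)
      = integral {a..c} (\<lambda>t. (f t - f c) * (1 - g t)) - integral {c..b} (\<lambda>t. (f t - f c) * g t)"
  proof (rule steffensen_remainder_split[OF \<open>a \<le> c\<close> \<open>c \<le> b\<close> integrable_continuous_interval[OF f_cont] g])
    show "(\<lambda>t. f t * g t) integrable_on {a..b}"
      by (rule integrable_on_continuous_mult_nonneg[OF f_cont g]) (use g01 in auto)
  qed (simp add: c_def lam_def)
  have "\<bar>integral {a..c} f - integral {a..b} (\<lambda>t. f t * g t)\<bar>
      \<le> \<bar>integral {a..c} (\<lambda>t. (f t - f c) * (1 - g t))\<bar> + \<bar>integral {c..b} (\<lambda>t. (f t - f c) * g t)\<bar>"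
    unfolding split by (rule abs_triangle_ineq4)
  also have "\<dots> \<le> (c - a)\<^sup>2 * (\<bar>f' a\<bar> / 6 + \<bar>f' c\<bar> / 3) + (b - c)\<^sup>2 * (\<bar>f' c\<bar> / 3 + \<bar>f' b\<bar> / 6)"
    using left right by (rule add_mono)
  also have "\<dots> = 1/6 * lam^2 * \<bar>f' a\<bar> + 1/3 * (lam^2 + (b - a - lam)^2) * \<bar>f' c\<bar>
      + 1/6 * (b - a - lam)^2 * \<bar>f' b\<bar>"
    by (simp add: c_def field_simps)
  finally show ?thesis
    unfolding c_def .
qed

lemma steffensen_gap_right_le:
  fixes f f' g :: "real \<Rightarrow> real"
  assumes "a \<le> b" and ac: "abs_continuous_on a b f"
    and f': "AE t in lborel. t \<in> {a..b} \<longrightarrow> (f has_real_derivative f' t) (at t)"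
    and cvx: "convex_on {a..b} (\<lambda>t. \<bar>f' t\<bar>)"
    and g: "g integrable_on {a..b}" and g01: "\<And>t. t \<in> {a..b} \<Longrightarrow> 0 \<le> g t \<and> g t \<le> 1"
  defines "lam \<equiv> integral {a..b} g"
  shows "\<bar>integral {a..b} (\<lambda>t. f t * g t) - integral {b - lam..b} f\<bar>
    \<le> 1/6 * lam^2 * \<bar>f' b\<bar> + 1/3 * (lam^2 + (b - a - lam)^2) * \<bar>f' (b - lam)\<bar>
      + 1/6 * (b - a - lam)^2 * \<bar>f' a\<bar>"
proof -
  \<comment> \<open>This is the left-hand estimate for the weight 1 - g, whose integral is b - a - lam.\<close>
  have g': "(\<lambda>t. 1 - g t) integrable_on {a..b}" and g'01: "\<And>t. t \<in> {a..b} \<Longrightarrow> 0 \<le> 1 - g t \<and> 1 - g t \<le> 1"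
    using g g01 by (auto intro: integrable_diff integrable_const_ivl)
  have lam': "integral {a..b} (\<lambda>t. 1 - g t) = b - a - lam"
    using \<open>a \<le> b\<close> unfolding lam_def
    by (simp add: Henstock_Kurzweil_Integration.integral_diff[OF integrable_const_ivl g])
  have "a \<le> b - lam" "b - lam \<le> b"
    using integral_unit_valued_bounds[OF \<open>a \<le> b\<close> g g01] unfolding lam_def by auto
  have f_cont: "continuous_on {a..b} f"
    using ac by (rule abs_continuous_on_imp_continuous_on)
  have f_int: "f integrable_on {a..b}"
    using f_cont by (rule integrable_continuous_interval)
  have fg_int: "(\<lambda>t. f t * g t) integrable_on {a..b}"
    by (rule integrable_on_continuous_mult_nonneg[OF f_cont g]) (use g01 in auto)
  have "integral {a..b} (\<lambda>t. f t * g t) - integral {b - lam..b} f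
      = integral {a..b - lam} f - integral {a..b} (\<lambda>t. f t * (1 - g t))"
    using Henstock_Kurzweil_Integration.integral_combine[OF \<open>a \<le> b - lam\<close> \<open>b - lam \<le> b\<close> f_int]
      Henstock_Kurzweil_Integration.integral_diff[OF f_int fg_int] by (simp add: right_diff_distrib)
  also have "\<bar>\<dots>\<bar> \<le> 1/6 * (b - a - lam)^2 * \<bar>f' a\<bar> + 1/3 * ((b - a - lam)^2 + lam^2) * \<bar>f' (b - lam)\<bar>
      + 1/6 * lam^2 * \<bar>f' b\<bar>"
    using steffensen_gap_left_le[OF \<open>a \<le> b\<close> ac f' cvx g' g'01] by (simp add: lam')
  finally show ?thesis
    by (simp add: algebra_simps)
qed

theorem corollary2p3:
  fixes a b lam :: real and f g f' :: "real \<Rightarrow> real"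
  assumes ab: "a < b" and a0: "0 \<le> a"
    and f_int: "f integrable_on {a..b}" and g_int: "g integrable_on {a..b}"
    and g_bounds: "\<forall>t\<in>{a..b}. 0 \<le> g t \<and> g t \<le> 1"
    and gf'_int: "(\<lambda>t. g t * f' t) integrable_on {a..b}"
    and f_ac: "abs_continuous_on a b f"
    and f'_deriv: "AE t in lborel. t \<in> {a..b} \<longrightarrow> (f has_real_derivative f' t) (at t)"
    and f'_convex: "convex_on {a..b} (\<lambda>t. \<bar>f' t\<bar>)"
    defines lam_def: "lam \<equiv> integral {a..b} g"
  shows "     \<bar>integral {a..a+lam} f - integral {a..b} (\<lambda>t. f t * g t)\<bar>
       \<le> 1/6 * lam^2 * \<bar>f' a\<bar> + 1/3 * (lam^2 + (b - a - lam)^2) * \<bar>f' (a + lam)\<bar>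
         + 1/6 * (b - a - lam)^2 * \<bar>f' b\<bar>
   \<and> \<bar>integral {a..b} (\<lambda>t. f t * g t) - integral {b-lam..b} f\<bar>
       \<le> 1/6 * lam^2 * \<bar>f' b\<bar> + 1/3 * (lam^2 + (b - a - lam)^2) * \<bar>f' (b - lam)\<bar>
         + 1/6 * (b - a - lam)^2 * \<bar>f' a\<bar>"
proof -
  have g01: "\<And>t. t \<in> {a..b} \<Longrightarrow> 0 \<le> g t \<and> g t \<le> 1"
    using g_bounds by blast
  show ?thesis
    using steffensen_gap_left_le[OF less_imp_le[OF ab] f_ac f'_deriv f'_convex g_int g01]
      steffensen_gap_right_le[OF less_imp_le[OF ab] f_ac f'_deriv f'_convex g_int g01]
    unfolding lam_def by blast
qed

end
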